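(* There is a universal constant $K_1>0$ such that for all $\alpha_m>0$, $\theta\in(0,1)$ and $h,\alpha_s,\eta>0$, the one-dimensional minimal energy satisfies \[ E^{1D}_{h,\alpha_s,\eta,\theta}\;\ge\; K_1\min\left(\alpha_m\eta^2\theta^2,\ \alpha_s^{2/3}\eta^{5/3}\frac{\theta^{5/3}}{(1-\theta)^{1/3}}\right)h . \]
   Context: Let $\mathbb T^1=\mathbb R/\mathbb Z$. Fix parameters $\alpha_m>0$ (membrane constant), $h>0$ (nondimensionalized film thickness), $\alpha_s>0$ (compliance ratio), $\eta>0$ (mismatch strain) and $\theta\in(0,1)$ (bonded fraction). The admissible class $\mathcal A^{1D}$ consists of triples $(w,u,\Omega)$ with $w\in H^1(\mathbb T^1;\mathbb R)$, $u\in H^2(\mathbb T^1;[0,\infty))$, $\Omega\subset\mathbb T^1$ closed with Lebesgue measure $|\Omega|=\theta$, and $u=0$ on $\Omega$. The energy is \[ E^{1D}[w,u,\Omega]=\alpha_m h\int_0^1\Big|w_x+\tfrac12 u_x^2-\eta\Big|^2dx+h^3\int_0^1|u_{xx}|^2dx+\alpha_s\Big(\int_\Omega|w_x|^2dx\Big)^{1/2}\Big(\int_\Omega|w|^2dx\Big)^{1/2}, \] and $E^{1D}_{h,\alpha_s,\eta,\theta}:=\inf_{(w,u,\Omega)\in\mathcal A^{1D}}E^{1D}[w,u,\Omega]$. *)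

theory Defs
  imports "HOL-Analysis.Analysis"
begin

text \<open>Functions on the torus R/Z are represented as 1-periodic functions on the real line.\<close>

definition periodic1 :: "(real \<Rightarrow> real) \<Rightarrow> bool" where
  "periodic1 f \<longleftrightarrow> (\<forall>x. f (x + 1) = f x)"

definition L2per :: "(real \<Rightarrow> real) \<Rightarrow> bool" where
  "L2per g \<longleftrightarrow> periodic1 g \<and> g absolutely_integrable_on {0..1}
                \<and> (\<lambda>x. (g x)^2) integrable_on {0..1}"

text \<open>f is in H1 of the torus (continuous representative) with weak derivative g.\<close>
definition H1per_deriv :: "(real \<Rightarrow> real) \<Rightarrow> (real \<Rightarrow> real) \<Rightarrow> bool" where
  "H1per_deriv f g \<longleftrightarrow> periodic1 f \<and> L2per g
      \<and> (\<forall>x\<in>{0..1}. f x = f 0 + integral {0..x} g)"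

text \<open>Closed subsets of the torus: closed 1-periodic subsets of R; measure taken over one period.\<close>
definition torus_closed :: "real set \<Rightarrow> bool" where
  "torus_closed S \<longleftrightarrow> closed S \<and> (\<forall>x. x \<in> S \<longleftrightarrow> x + 1 \<in> S)"

definition admissible1D ::
  "real \<Rightarrow> (real \<Rightarrow> real) \<Rightarrow> (real \<Rightarrow> real) \<Rightarrow> (real \<Rightarrow> real) \<Rightarrow> (real \<Rightarrow> real)
     \<Rightarrow> (real \<Rightarrow> real) \<Rightarrow> real set \<Rightarrow> bool" where
  "admissible1D \<theta> w wx u ux uxx \<Omega> \<longleftrightarrow>
     H1per_deriv w wx \<and> H1per_deriv u ux \<and> H1per_deriv ux uxx
     \<and> (\<forall>x. u x \<ge> 0)
     \<and> torus_closed \<Omega> \<and> measure lebesgue (\<Omega> \<inter> {0..1}) = \<theta>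
     \<and> (\<forall>x\<in>\<Omega>. u x = 0)"

definition energy1D ::
  "real \<Rightarrow> real \<Rightarrow> real \<Rightarrow> real \<Rightarrow> (real \<Rightarrow> real) \<Rightarrow> (real \<Rightarrow> real) \<Rightarrow> (real \<Rightarrow> real)
     \<Rightarrow> (real \<Rightarrow> real) \<Rightarrow> real set \<Rightarrow> real" where
  "energy1D \<alpha>m h \<alpha>s \<eta> w wx ux uxx \<Omega> =
     \<alpha>m * h * integral {0..1} (\<lambda>x. (wx x + (ux x)^2 / 2 - \<eta>)^2)
     + h^3 * integral {0..1} (\<lambda>x. (uxx x)^2)
     + \<alpha>s * sqrt (integral (\<Omega> \<inter> {0..1}) (\<lambda>x. (wx x)^2))
           * sqrt (integral (\<Omega> \<inter> {0..1}) (\<lambda>x. (w x)^2))"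

definition minE1D :: "real \<Rightarrow> real \<Rightarrow> real \<Rightarrow> real \<Rightarrow> real \<Rightarrow> real" where
  "minE1D \<alpha>m h \<alpha>s \<eta> \<theta> =
     Inf {energy1D \<alpha>m h \<alpha>s \<eta> w wx ux uxx \<Omega> | w wx u ux uxx \<Omega>.
            admissible1D \<theta> w wx u ux uxx \<Omega>}"

end

theory Submission
  imports Defs
begin

text \<open>If the membrane term is large there is nothing to prove. Otherwise the strain
  \<open>wx + ux\<^sup>2/2 - \<eta>\<close> is small in \<open>L\<^sup>1\<close>, and since \<open>w\<close> is periodic the mismatch \<open>\<eta>\<close> must be taken up by
  \<open>\<integral> ux\<^sup>2 \<ge> \<eta>\<close>. As \<open>u \<ge> 0\<close> vanishes on \<open>\<Omega>\<close>, so does \<open>ux\<close>, and a Poincare inequality off \<open>\<Omega>\<close> turns this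
  into bending energy \<open>B = \<integral> uxx\<^sup>2 \<ge> \<eta> / (1 - \<theta>)\<close>. On \<open>\<Omega>\<close> the strain is \<open>wx - \<eta>\<close>, so
  \<open>\<integral>\<^sub>\<Omega> wx\<^sup>2 \<ge> \<eta>\<^sup>2 \<theta> / 4\<close>. Cutting the torus into cells of length \<open>l \<sim> sqrt (\<eta> \<theta> / ((1 - \<theta>) B))\<close>,
  the cells carrying a fair share of \<open>\<Omega>\<close> and little strain and slope hold at least half of \<open>\<Omega>\<close>;
  in each of them \<open>w\<close> increases at rate about \<open>\<eta>\<close> across \<open>\<Omega>\<close>, so \<open>\<integral>\<^sub>\<Omega> w\<^sup>2 \<ge> c \<eta>\<^sup>2 \<theta>\<^sup>3 l\<^sup>2\<close>.
  The substrate term is then at least \<open>c \<alpha>s \<eta>\<^sup>2 \<theta>\<^sup>2 l\<close>, and balancing it against \<open>h\<^sup>3 B\<close> gives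
  the \<open>\<alpha>s powr (2/3)\<close> branch of the minimum.\<close>

lemma L2per_integrable_on:
  assumes "L2per g" "0 \<le> a" "b \<le> 1"
  shows "g absolutely_integrable_on {a..b}" "g integrable_on {a..b}"
    "(\<lambda>x. (g x)^2) integrable_on {a..b}"
proof -
  have sub: "{a..b} \<subseteq> {0..1}" using assms by auto
  show ai: "g absolutely_integrable_on {a..b}"
    using absolutely_integrable_on_subinterval[OF _ sub] assms(1) unfolding L2per_def by auto
  then show "g integrable_on {a..b}" unfolding absolutely_integrable_on_def by auto
  show "(\<lambda>x. (g x)^2) integrable_on {a..b}"
    using integrable_on_subinterval[OF _ sub] assms(1) unfolding L2per_def by auto
qed

lemma H1per_derivD:
  assumes "H1per_deriv F G"
  shows "F (x + 1) = F x" "L2per G"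
  using assms unfolding H1per_deriv_def periodic1_def by blast+

lemma H1per_deriv_increment:
  assumes "H1per_deriv F G" "0 \<le> a" "a \<le> b" "b \<le> 1"
  shows "F b - F a = integral {a..b} G"
proof -
  have FTC: "F x = F 0 + integral {0..x} G" if "x \<in> {0..1}" for x
    using assms(1) that unfolding H1per_deriv_def by blast
  have "G integrable_on {0..b}"
    using L2per_integrable_on(2)[OF H1per_derivD(2)[OF assms(1)]] assms by auto
  then have "integral {0..a} G + integral {a..b} G = integral {0..b} G"
    using Henstock_Kurzweil_Integration.integral_combine[of 0 a b G] assms by auto
  then show ?thesis using FTC[of a] FTC[of b] assms by auto
qed

lemma H1per_deriv_continuous_on:
  assumes "H1per_deriv F G"
  shows "continuous_on {0..1} F"
proof -
  have "G integrable_on {0..1}"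
    using L2per_integrable_on(2)[OF H1per_derivD(2)[OF assms]] by auto
  then have "continuous_on {0..1} (\<lambda>x. F 0 + integral {0..x} G)"
    by (intro continuous_intros indefinite_integral_continuous_1)
  moreover have "F 0 + integral {0..x} G = F x" if "x \<in> {0..1}" for x
    using assms that unfolding H1per_deriv_def by (metis (no_types))
  ultimately show ?thesis by (rule continuous_on_eq)
qed

lemma H1per_deriv_nonneg_at_zero:
  assumes "H1per_deriv F G" "continuous_on {0..1} G" "\<And>x. 0 \<le> F x"
    and "0 \<le> z" "z < 1" "F z = 0"
  shows "0 \<le> G z"
proof (rule ccontr)
  assume "\<not> 0 \<le> G z"
  then have neg: "G z < 0" by simp
  obtain d where d: "d > 0" "\<forall>x\<in>{0..1}. dist x z < d \<longrightarrow> dist (G x) (G z) < - G z / 2"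
    using assms(2) assms(4,5) neg unfolding continuous_on_iff by (metis atLeastAtMost_iff
        less_eq_real_def neg_0_less_iff_less half_gt_zero)
  define y where "y = min (z + d/2) 1"
  have zy: "z < y" "y \<le> 1" using d assms by (auto simp: y_def)
  have le: "G x \<le> G z / 2" if "x \<in> {z..y}" for x
  proof -
    have "x \<in> {0..1}" "dist x z < d" using that zy assms d by (auto simp: y_def dist_real_def)
    then have "dist (G x) (G z) < - G z / 2" using d by auto
    then show ?thesis unfolding dist_real_def by arith
  qed
  have "F y - F z = integral {z..y} G" using H1per_deriv_increment[OF assms(1), of z y] zy assms by auto
  also have "\<dots> \<le> integral {z..y} (\<lambda>x. G z / 2)"
    using L2per_integrable_on(2)[OF H1per_derivD(2)[OF assms(1)], of z y] assms zy le
    by (intro integral_le) auto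
  also have "\<dots> < 0" using zy neg by (simp add: mult_pos_neg)
  finally show False using assms(3)[of y] assms(6) by linarith
qed

lemma H1per_deriv_nonpos_at_zero:
  assumes "H1per_deriv F G" "continuous_on {0..1} G" "\<And>x. 0 \<le> F x"
    and "0 < z" "z \<le> 1" "F z = 0"
  shows "G z \<le> 0"
proof (rule ccontr)
  assume "\<not> G z \<le> 0"
  then have pos: "G z > 0" by simp
  obtain d where d: "d > 0" "\<forall>x\<in>{0..1}. dist x z < d \<longrightarrow> dist (G x) (G z) < G z / 2"
    using assms(2) assms(4,5) pos unfolding continuous_on_iff
    by (metis atLeastAtMost_iff less_eq_real_def half_gt_zero)
  define y where "y = max (z - d/2) 0"
  have zy: "y < z" "0 \<le> y" using d assms by (auto simp: y_def)
  have le: "G z / 2 \<le> G x" if "x \<in> {y..z}" for x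
  proof -
    have "x \<in> {0..1}" "dist x z < d" using that zy assms d by (auto simp: y_def dist_real_def)
    then have "dist (G x) (G z) < G z / 2" using d by auto
    then show ?thesis unfolding dist_real_def by arith
  qed
  have "0 < integral {y..z} (\<lambda>x. G z / 2)" using zy pos by simp
  also have "\<dots> \<le> integral {y..z} G"
    using L2per_integrable_on(2)[OF H1per_derivD(2)[OF assms(1)], of y z] assms zy le
    by (intro integral_le) auto
  also have "\<dots> = F z - F y" using H1per_deriv_increment[OF assms(1), of y z] zy assms by auto
  finally show False using assms(3)[of y] assms(6) by linarith
qed

lemma square_integral_le:
  fixes g :: "real \<Rightarrow> real"
  assumes "g integrable_on {a..b}" "(\<lambda>x. (g x)^2) integrable_on {a..b}" "a \<le> b"
  shows "(integral {a..b} g)^2 \<le> (b - a) * integral {a..b} (\<lambda>x. (g x)^2)"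
proof (cases "a = b")
  case True
  then show ?thesis by simp
next
  case False
  define I where "I = integral {a..b} g"
  define t where "t = I / (b - a)"
  have ba: "b - a > 0" using False assms by auto
  \<comment> \<open>integrate \<open>(g - t)\<^sup>2 \<ge> 0\<close> for the mean value \<open>t\<close>\<close>
  have "((\<lambda>x. (g x - t)^2) has_integral
      (integral {a..b} (\<lambda>x. (g x)^2) - 2 * t * I + t^2 * (b - a))) {a..b}"
  proof -
    have "((\<lambda>x. (g x)^2 - 2 * t * g x + t^2) has_integral
        (integral {a..b} (\<lambda>x. (g x)^2) - 2 * t * I + t^2 * (b - a))) {a..b}"
      using assms unfolding I_def
      by (intro has_integral_add has_integral_diff has_integral_mult_right integrable_integral)
         (use has_integral_const_real[of "t^2" a b] ba in \<open>auto simp: mult.commute\<close>)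
    then show ?thesis by (simp add: power2_diff algebra_simps)
  qed
  then have "0 \<le> integral {a..b} (\<lambda>x. (g x)^2) - 2 * t * I + t^2 * (b - a)"
    by (rule has_integral_nonneg) simp
  also have "\<dots> = integral {a..b} (\<lambda>x. (g x)^2) - I^2 / (b - a)"
  proof -
    have "2 * t * I = 2 * (I^2 / (b - a))" "t^2 * (b - a) = I^2 / (b - a)"
      using ba by (simp_all add: t_def power2_eq_square)
    then show ?thesis by simp
  qed
  finally show ?thesis using ba unfolding I_def by (simp add: field_simps)
qed

lemma integrable_restrict_measurable:
  fixes g :: "real \<Rightarrow> real"
  assumes "g absolutely_integrable_on {a..b}" "S \<in> sets lebesgue"
  shows "(\<lambda>x. if x \<in> S then g x else 0) integrable_on {a..b}"
proof -
  have "g absolutely_integrable_on (S \<inter> {a..b})"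
    by (rule set_integrable_subset[OF assms(1)]) (use assms(2) in auto)
  then have "g integrable_on (S \<inter> {a..b})" unfolding absolutely_integrable_on_def by auto
  then show ?thesis by (rule integrable_restrict_Int[THEN iffD2])
qed

lemma integral_indicator_interval_le:
  fixes p D a b :: real
  assumes "0 \<le> D"
  shows "integral {a..b} (indicat_real {p..p+D}) \<le> D"
proof -
  have "integral {a..b} (indicat_real {p..p+D}) = integral {a..b} (\<lambda>x. if x \<in> {p..p+D} then 1 else 0)"
    by (rule integral_cong) (simp add: indicator_def)
  also have "\<dots> = integral ({p..p+D} \<inter> {a..b}) (\<lambda>x. 1::real)"
    by (rule integral_restrict_Int)
  also have "\<dots> = integral {max p a..min (p+D) b} (\<lambda>x. 1::real)" by simp
  also have "\<dots> \<le> D" using assms by (cases "max p a \<le> min (p+D) b") auto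
  finally show ?thesis .
qed

lemma integral_uniform_partition:
  fixes g :: "real \<Rightarrow> real"
  assumes "g integrable_on {0..1}" "0 < n"
  shows "integral {0..1} g = (\<Sum>k<n. integral {real k / n..real (Suc k) / n} g)"
proof -
  have "integral {0..real j / n} g = (\<Sum>k<j. integral {real k / n..real (Suc k) / n} g)"
    if "j \<le> n" for j
    using that
  proof (induction j)
    case 0
    then show ?case by simp
  next
    case (Suc j)
    have le1: "real (Suc j) / n \<le> 1" using Suc.prems assms by (simp add: field_simps)
    have le2: "real j / n \<le> real (Suc j) / n" using assms by (simp add: divide_right_mono)
    have "g integrable_on {0..real (Suc j) / n}"
      by (rule integrable_on_subinterval[OF assms(1)]) (use le1 in auto)
    then have "integral {0..real j / n} g + integral {real j / n..real (Suc j) / n} g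
        = integral {0..real (Suc j) / n} g"
      by (intro Henstock_Kurzweil_Integration.integral_combine le2) auto
    then show ?case using Suc by simp
  qed
  from this[of n] show ?thesis using assms by simp
qed

lemma subset_atLeastAtMost_if_spread_le:
  fixes S :: "real set"
  assumes "bdd_below S" "0 \<le> D" "\<And>x y. x \<in> S \<Longrightarrow> y \<in> S \<Longrightarrow> y - x \<le> D"
  obtains p where "S \<subseteq> {p..p + D}"
proof (cases "S = {}")
  case False
  have "y \<in> {Inf S..Inf S + D}" if "y \<in> S" for y
  proof -
    have "y - D \<le> Inf S"
      by (rule cInf_greatest[OF False]) (use assms(3) that in fastforce)
    then show ?thesis using cInf_lower[OF that assms(1)] by simp
  qed
  then show ?thesis using that by blast
qed (use that in blast)

lemma exists_mesh:
  fixes R :: real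
  assumes "1 \<le> R"
  obtains n :: nat where "0 < n" "1 / (4 * R) \<le> (1 / real n)^2" "(1 / real n)^2 \<le> 1 / R"
proof
  define n where "n = nat \<lceil>sqrt R\<rceil>"
  have sR: "1 \<le> sqrt R" using assms by simp
  have nge: "sqrt R \<le> real n" unfolding n_def by (simp add: real_nat_ceiling_ge)
  have nle: "real n \<le> 2 * sqrt R"
    using ceiling_correct[of "sqrt R"] sR unfolding n_def by linarith
  have "1 \<le> real n" using nge sR by linarith
  then show "0 < n" by simp
  have "R \<le> (real n)^2" using power_mono[OF nge, of 2] assms by simp
  then show "(1 / real n)^2 \<le> 1 / R" using assms by (simp add: power_divide frac_le)
  have "(real n)^2 \<le> 4 * R" using power_mono[OF nle, of 2] assms by (simp add: power_mult_distrib)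
  then show "1 / (4 * R) \<le> (1 / real n)^2"
    using \<open>0 < n\<close> assms by (simp add: power_divide frac_le)
qed

lemma powr_cube:
  fixes a r :: real
  assumes "0 < a"
  shows "(a powr r)^3 = a powr (3 * r)"
  using powr_power[of a r 3] assms by simp

lemma cube_of_powr_monomial:
  fixes a b c d :: real
  assumes "0 < a" "0 < b" "0 < c" "0 < d"
  shows "(a powr (2/3) * b powr (5/3) * c powr (5/3) / d powr (1/3))^3 = a^2 * b^5 * c^5 / d"
proof -
  have cubes: "(a powr (2/3))^3 = a^2" "(b powr (5/3))^3 = b^5" "(c powr (5/3))^3 = c^5"
    "(d powr (1/3))^3 = d"
    using powr_cube[of _ "2/3"] powr_cube[of _ "5/3"] powr_cube[of _ "1/3"] assms
    by (simp_all add: powr_realpow)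
  have "(a powr (2/3) * b powr (5/3) * c powr (5/3) / d powr (1/3))^3
      = (a powr (2/3))^3 * (b powr (5/3))^3 * (c powr (5/3))^3 / (d powr (1/3))^3"
    by (simp only: power_mult_distrib power_divide)
  then show ?thesis by (simp only: cubes)
qed

lemma substrate_bending_balance:
  fixes \<alpha>s \<eta> \<theta> h B l E :: real
  assumes "0 < \<alpha>s" "0 < \<eta>" "0 < \<theta>" "\<theta> < 1" "0 < h" "0 < B" "0 < l"
    and mesh: "\<eta> * \<theta> / (512 * B * (1 - \<theta>)) \<le> l^2"
    and bending: "h^3 * B \<le> E" and substrate: "\<alpha>s * \<eta>^2 * \<theta>^2 * l / 128 \<le> E"
  shows "\<alpha>s powr (2/3) * \<eta> powr (5/3) * \<theta> powr (5/3) / (1 - \<theta>) powr (1/3) * h / 256 \<le> E"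
proof -
  define S where "S = \<alpha>s powr (2/3) * \<eta> powr (5/3) * \<theta> powr (5/3) / (1 - \<theta>) powr (1/3)"
  have X0: "0 \<le> \<alpha>s * \<eta>^2 * \<theta>^2 * l / 128" using assms by simp
  then have E0: "0 \<le> E" using substrate by linarith
  have "(S * h / 256)^3 = S^3 * h^3 / 16777216" by (simp add: power_mult_distrib power_divide)
  also have "\<dots> = h^3 * (\<alpha>s^2 * \<eta>^5 * \<theta>^5 / (1 - \<theta>)) / 16777216"
    using cube_of_powr_monomial[of \<alpha>s \<eta> \<theta> "1 - \<theta>"] assms by (simp add: S_def)
  also have "\<dots> \<le> h^3 * (\<alpha>s^2 * \<eta>^5 * \<theta>^5 / (1 - \<theta>)) / 8388608"
    using assms by (intro divide_left_mono) auto
  also have "\<dots> = h^3 * B * ((\<alpha>s * \<eta>^2 * \<theta>^2 / 128)^2 * (\<eta> * \<theta> / (512 * B * (1 - \<theta>))))"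
    using assms by (simp add: power2_eq_square eval_nat_numeral field_simps)
  also have "\<dots> \<le> h^3 * B * ((\<alpha>s * \<eta>^2 * \<theta>^2 / 128)^2 * l^2)"
    using assms mesh by (intro mult_left_mono) auto
  also have "\<dots> = h^3 * B * (\<alpha>s * \<eta>^2 * \<theta>^2 * l / 128)^2"
    by (simp add: power_mult_distrib power_divide)
  also have "\<dots> \<le> E * E^2"
    using bending substrate X0 E0 assms by (intro mult_mono power_mono) auto
  also have "\<dots> = E^3" by (simp add: power3_eq_cube power2_eq_square)
  finally have "(S * h / 256)^3 \<le> E^3" .
  then show ?thesis using E0 power_le_imp_le_base[of "S * h / 256" 2 E] by (simp add: S_def)
qed

lemma bad_cell_mass_le:
  fixes m l B F \<kappa> \<eta> :: real
  assumes "0 \<le> m" "m \<le> l" "0 < \<kappa>" "0 < \<eta>" "0 \<le> B" "0 \<le> F"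
    and bad: "\<eta> * m \<le> 2 * ((l - m) * (l * B)) + 4 * F"
  shows "m \<le> (\<kappa> * (m * (l - m)) + 2 * l * B / (\<eta> * \<kappa>)) / 2 + 4 * F / \<eta>"
proof -
  define X Y where "X = m * (l - m)" and "Y = 2 * l * B / \<eta>"
  have XY: "0 \<le> X" "0 \<le> Y" using assms by (auto simp: X_def Y_def)
  have Y\<kappa>: "2 * l * B / (\<eta> * \<kappa>) = Y / \<kappa>" by (simp add: Y_def)
  have nonneg: "0 \<le> (\<kappa> * X + Y / \<kappa>) / 2" using XY assms(3) by simp
  show ?thesis
  proof (cases "m \<le> 4 * F / \<eta>")
    case True
    then show ?thesis using nonneg unfolding Y\<kappa> X_def[symmetric] by linarith
  next
    case False
    define z where "z = m - 4 * F / \<eta>"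
    have z: "0 < z" "z \<le> m" using False assms(4,6) by (auto simp: z_def)
    have "m \<le> (2 * ((l - m) * (l * B)) + 4 * F) / \<eta>"
      using bad assms(4) by (simp add: pos_le_divide_eq mult.commute)
    moreover have "(l - m) * Y = 2 * ((l - m) * (l * B)) / \<eta>" by (simp add: Y_def algebra_simps)
    ultimately have "z \<le> (l - m) * Y" by (simp add: z_def add_divide_distrib)
    then have "z * z \<le> m * ((l - m) * Y)"
      using z by (intro mult_mono) auto
    then have "z^2 \<le> X * Y" by (simp add: X_def power2_eq_square mult.assoc)
    \<comment> \<open>AM-GM\<close>
    also have "X * Y \<le> ((\<kappa> * X + Y / \<kappa>) / 2)^2"
    proof -
      have "((\<kappa> * X + Y / \<kappa>) / 2)^2 - X * Y = ((\<kappa> * X - Y / \<kappa>) / 2)^2"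
        using assms(3) by (simp add: power2_eq_square field_simps)
      then show ?thesis by (metis diff_ge_0_iff_ge zero_le_power2)
    qed
    finally have "z \<le> (\<kappa> * X + Y / \<kappa>) / 2"
      using nonneg by (rule power2_le_imp_le)
    then show ?thesis unfolding Y\<kappa> X_def[symmetric] z_def by linarith
  qed
qed

text \<open>The unit interval is cut into \<open>n\<close> cells of length \<open>l\<close>; cell \<open>k\<close> carries the mass \<open>m k\<close>
  of \<open>\<Omega>\<close>, bending energy \<open>B k\<close>, strain \<open>F k\<close>, energy \<open>U k\<close> of \<open>ux\<close> and substrate integral
  \<open>W k\<close>.\<close>

locale cell_estimates =
  fixes n :: nat and l \<theta> \<eta> Bt :: real and m B F U W :: "nat \<Rightarrow> real"
  assumes n_pos: "0 < n" and cell_length: "l = 1 / real n"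
    and mass_bounds: "\<And>k. k < n \<Longrightarrow> 0 \<le> m k \<and> m k \<le> l" and mass_sum: "(\<Sum>k<n. m k) = \<theta>"
    and \<theta>_bounds: "0 < \<theta>" "\<theta> < 1" and \<eta>_pos: "0 < \<eta>"
    and bending_nonneg: "\<And>k. k < n \<Longrightarrow> 0 \<le> B k" and bending_sum: "(\<Sum>k<n. B k) = Bt"
    and bending_pos: "0 < Bt"
    and strain_nonneg: "\<And>k. k < n \<Longrightarrow> 0 \<le> F k" and strain_sum: "(\<Sum>k<n. F k) \<le> \<eta> * \<theta> / 32"
    and slope_le: "\<And>k. k < n \<Longrightarrow> 0 < m k \<Longrightarrow> U k \<le> (l - m k) * (l * B k)"
    and W_nonneg: "\<And>k. k < n \<Longrightarrow> 0 \<le> W k"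
    and W_ge: "\<And>k. k < n \<Longrightarrow> U k / 2 + F k \<le> \<eta> * m k / 4 \<Longrightarrow> \<eta>^2 * (m k)^3 / 128 \<le> W k"
    and mesh: "l^2 \<le> \<eta> * \<theta> / (128 * Bt * (1 - \<theta>))"
begin

definition bad_cell :: "nat \<Rightarrow> bool" where
  "bad_cell k \<longleftrightarrow> \<eta> * m k / 4 < U k / 2 + F k"

definition light_cell :: "nat \<Rightarrow> bool" where
  "light_cell k \<longleftrightarrow> m k < \<theta> * l / 4"

lemma l_pos: "0 < l"
  using n_pos cell_length by simp

lemma sum_mass_times_complement_le: "(\<Sum>k<n. m k * (l - m k)) \<le> l * \<theta> * (1 - \<theta>)"
proof -
  have "\<theta>^2 \<le> (\<Sum>k<n. (m k)^2) * real n"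
    using Cauchy_Schwarz_ineq_sum[of m "\<lambda>_. 1" "{..<n}"] by (simp add: mass_sum)
  then have "\<theta>^2 * l \<le> (\<Sum>k<n. (m k)^2)"
    using n_pos by (simp add: cell_length field_simps)
  moreover have "(\<Sum>k<n. m k * (l - m k)) = l * (\<Sum>k<n. m k) - (\<Sum>k<n. (m k)^2)"
    by (simp add: sum_subtractf sum_distrib_left power2_eq_square algebra_simps)
  ultimately show ?thesis by (simp add: mass_sum power2_eq_square algebra_simps)
qed

lemma bad_cells_mass_le: "(\<Sum>k<n. if bad_cell k then m k else 0) \<le> \<theta> / 4"
proof -
  define \<kappa> where "\<kappa> = 1 / (8 * l * (1 - \<theta>))"
  have \<kappa>: "0 < \<kappa>" using l_pos \<theta>_bounds by (simp add: \<kappa>_def)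
  let ?bound = "\<lambda>k. \<kappa> / 2 * (m k * (l - m k)) + l / (\<eta> * \<kappa>) * B k + 4 / \<eta> * F k"
  have "(if bad_cell k then m k else 0) \<le> ?bound k" if "k < n" for k
  proof -
    have "0 \<le> ?bound k"
      using mass_bounds[OF that] bending_nonneg[OF that] strain_nonneg[OF that] \<kappa> \<eta>_pos l_pos
      by simp
    moreover have "m k \<le> ?bound k" if "bad_cell k" "0 < m k"
    proof -
      have "\<eta> * m k \<le> 2 * ((l - m k) * (l * B k)) + 4 * F k"
        using that slope_le[OF \<open>k < n\<close>] unfolding bad_cell_def by linarith
      then show ?thesis
        using bad_cell_mass_le[of "m k" l \<kappa> \<eta> "B k" "F k"] mass_bounds[OF \<open>k < n\<close>] \<kappa> \<eta>_pos
          bending_nonneg[OF \<open>k < n\<close>] strain_nonneg[OF \<open>k < n\<close>]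
        by (simp add: field_simps)
    qed
    ultimately show ?thesis using mass_bounds[OF that] by (cases "m k = 0") auto
  qed
  then have "(\<Sum>k<n. if bad_cell k then m k else 0) \<le> (\<Sum>k<n. ?bound k)"
    by (intro sum_mono) auto
  also have "\<dots> = \<kappa> / 2 * (\<Sum>k<n. m k * (l - m k)) + l / (\<eta> * \<kappa>) * Bt + 4 / \<eta> * (\<Sum>k<n. F k)"
    by (simp only: sum.distrib sum_distrib_left[symmetric] bending_sum)
  also have "\<dots> \<le> \<kappa> / 2 * (l * \<theta> * (1 - \<theta>)) + l / (\<eta> * \<kappa>) * Bt + 4 / \<eta> * (\<eta> * \<theta> / 32)"
    using sum_mass_times_complement_le strain_sum \<kappa> \<eta>_pos l_pos
    by (intro add_mono mult_left_mono) auto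
  also have "l / (\<eta> * \<kappa>) * Bt = l^2 * (8 * (1 - \<theta>) * Bt / \<eta>)"
    by (simp add: \<kappa>_def power2_eq_square)
  also have "\<dots> \<le> \<eta> * \<theta> / (128 * Bt * (1 - \<theta>)) * (8 * (1 - \<theta>) * Bt / \<eta>)"
    using \<theta>_bounds bending_pos \<eta>_pos by (intro mult_right_mono mesh) auto
  also have "\<eta> * \<theta> / (128 * Bt * (1 - \<theta>)) * (8 * (1 - \<theta>) * Bt / \<eta>) = \<theta> / 16"
    using \<theta>_bounds bending_pos \<eta>_pos by (simp add: field_simps)
  also have "\<kappa> / 2 * (l * \<theta> * (1 - \<theta>)) = \<theta> / 16"
    using l_pos \<theta>_bounds by (simp add: \<kappa>_def field_simps)
  finally show ?thesis using \<eta>_pos by simp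
qed

lemma light_cells_mass_le: "(\<Sum>k<n. if light_cell k then m k else 0) \<le> \<theta> / 4"
proof -
  have "(\<Sum>k<n. if light_cell k then m k else 0) \<le> (\<Sum>k<n. \<theta> * l / 4)"
    using \<theta>_bounds l_pos mass_bounds by (intro sum_mono) (auto simp: light_cell_def)
  also have "\<dots> = \<theta> / 4" using n_pos by (simp add: cell_length)
  finally show ?thesis .
qed

lemma good_cells_mass_ge:
  "\<theta> / 2 \<le> (\<Sum>k<n. if \<not> bad_cell k \<and> \<not> light_cell k then m k else 0)"
proof -
  have "\<theta> \<le> (\<Sum>k<n. (if \<not> bad_cell k \<and> \<not> light_cell k then m k else 0)
      + (if bad_cell k then m k else 0) + (if light_cell k then m k else 0))"
    unfolding mass_sum[symmetric] using mass_bounds by (intro sum_mono) auto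
  then show ?thesis
    using bad_cells_mass_le light_cells_mass_le by (simp add: sum.distrib)
qed

lemma sum_W_ge: "\<eta>^2 * \<theta>^3 * l^2 / 4096 \<le> (\<Sum>k<n. W k)"
proof -
  define c where "c = \<eta>^2 * \<theta>^2 * l^2 / 2048"
  have "c * (if \<not> bad_cell k \<and> \<not> light_cell k then m k else 0) \<le> W k" if "k < n" for k
  proof (cases "\<not> bad_cell k \<and> \<not> light_cell k")
    case True
    then have mass: "\<theta> * l / 4 \<le> m k" and W: "\<eta>^2 * (m k)^3 / 128 \<le> W k"
      using W_ge[OF that] by (auto simp: bad_cell_def light_cell_def)
    have "c * m k = \<eta>^2 * m k * (\<theta> * l / 4)^2 / 128"
      by (simp add: c_def power2_eq_square)
    also have "\<dots> \<le> \<eta>^2 * m k * (m k)^2 / 128"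
      using mass \<theta>_bounds l_pos mass_bounds[OF that]
      by (intro divide_right_mono mult_left_mono power_mono) auto
    also have "\<dots> \<le> W k" using W by (simp add: power2_eq_square power3_eq_cube)
    finally show ?thesis using True by simp
  qed (use W_nonneg[OF that] in auto)
  then have "c * (\<Sum>k<n. if \<not> bad_cell k \<and> \<not> light_cell k then m k else 0) \<le> (\<Sum>k<n. W k)"
    unfolding sum_distrib_left by (intro sum_mono) auto
  moreover have "c * (\<theta> / 2) \<le> c * (\<Sum>k<n. if \<not> bad_cell k \<and> \<not> light_cell k then m k else 0)"
    using good_cells_mass_ge by (intro mult_left_mono) (auto simp: c_def)
  ultimately show ?thesis by (simp add: c_def power2_eq_square power3_eq_cube)
qed

end

locale admissible_config =
  fixes \<theta> \<eta> :: real and w wx u ux uxx :: "real \<Rightarrow> real" and \<Omega> :: "real set"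
  assumes admissible: "admissible1D \<theta> w wx u ux uxx \<Omega>"
    and \<theta>_pos: "0 < \<theta>" and \<theta>_less_1: "\<theta> < 1" and \<eta>_pos: "0 < \<eta>"
begin

lemma w_H1: "H1per_deriv w wx"
  and u_H1: "H1per_deriv u ux"
  and ux_H1: "H1per_deriv ux uxx"
  and u_nonneg: "0 \<le> u x"
  and \<Omega>_closed: "closed \<Omega>"
  and \<Omega>_periodic: "x \<in> \<Omega> \<longleftrightarrow> x + 1 \<in> \<Omega>"
  and \<Omega>_measure: "measure lebesgue (\<Omega> \<inter> {0..1}) = \<theta>"
  and u_vanishes: "x \<in> \<Omega> \<Longrightarrow> u x = 0"
  using admissible unfolding admissible1D_def torus_closed_def by blast+

definition strain :: "real \<Rightarrow> real" where
  "strain x = wx x + (ux x)^2 / 2 - \<eta>"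

lemma \<Omega>_lmeasurable: "\<Omega> \<inter> {a..b} \<in> lmeasurable"
  using \<Omega>_closed by (simp add: closed_Int_compact lmeasurable_compact)

lemma indicator_\<Omega>_integrable: "indicat_real \<Omega> integrable_on {a..b}"
  using \<Omega>_lmeasurable integrable_on_indicator by blast

lemma integral_indicator_\<Omega>: "integral {0..1} (indicat_real \<Omega>) = \<theta>"
  using integral_indicator[OF \<Omega>_lmeasurable] \<Omega>_measure by simp

lemma integral_indicator_\<Omega>_bounds:
  assumes "a \<le> b"
  shows "0 \<le> integral {a..b} (indicat_real \<Omega>)" "integral {a..b} (indicat_real \<Omega>) \<le> b - a"
proof -
  show "0 \<le> integral {a..b} (indicat_real \<Omega>)"
    by (rule integral_nonneg[OF indicator_\<Omega>_integrable]) auto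
  have "integral {a..b} (indicat_real \<Omega>) \<le> integral {a..b} (\<lambda>x. 1::real)"
    by (rule integral_le[OF indicator_\<Omega>_integrable]) (auto simp: indicator_def)
  then show "integral {a..b} (indicat_real \<Omega>) \<le> b - a" using assms by simp
qed

lemma wx_integrable: "0 \<le> a \<Longrightarrow> b \<le> 1 \<Longrightarrow> wx absolutely_integrable_on {a..b}"
  "0 \<le> a \<Longrightarrow> b \<le> 1 \<Longrightarrow> (\<lambda>x. (wx x)^2) integrable_on {a..b}"
  using L2per_integrable_on[OF H1per_derivD(2)[OF w_H1]] by auto

lemma ux_integrable: "0 \<le> a \<Longrightarrow> b \<le> 1 \<Longrightarrow> (\<lambda>x. (ux x)^2) integrable_on {a..b}"
  using L2per_integrable_on[OF H1per_derivD(2)[OF u_H1]] by auto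

lemma uxx_integrable: "0 \<le> a \<Longrightarrow> b \<le> 1 \<Longrightarrow> uxx integrable_on {a..b}"
  "0 \<le> a \<Longrightarrow> b \<le> 1 \<Longrightarrow> (\<lambda>x. (uxx x)^2) integrable_on {a..b}"
  using L2per_integrable_on[OF H1per_derivD(2)[OF ux_H1]] by auto

lemma strain_integrable:
  assumes "0 \<le> a" "b \<le> 1"
  shows "strain integrable_on {a..b}" "(\<lambda>x. \<bar>strain x\<bar>) integrable_on {a..b}"
    "(\<lambda>x. (strain x)^2) integrable_on {a..b}"
proof -
  define c where "c x = (ux x)^2 / 2 - \<eta>" for x
  have "continuous_on {a..b} ux"
    using H1per_deriv_continuous_on[OF ux_H1] by (rule continuous_on_subset) (use assms in auto)
  then have cc: "continuous_on {a..b} c" unfolding c_def by (intro continuous_intros) auto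
  have strain_eq: "strain = (\<lambda>x. wx x + c x)" by (auto simp: strain_def c_def)
  have "strain absolutely_integrable_on {a..b}" unfolding strain_eq
    using set_integral_add(1)[OF wx_integrable(1)[OF assms] absolutely_integrable_continuous_real[OF cc]] .
  then show "strain integrable_on {a..b}" "(\<lambda>x. \<bar>strain x\<bar>) integrable_on {a..b}"
    unfolding absolutely_integrable_on_def by auto
  have "(\<lambda>x. c x * wx x) absolutely_integrable_on {a..b}"
  proof (rule absolutely_integrable_bounded_measurable_product_real[OF _ _ _ wx_integrable(1)[OF assms]])
    show "c \<in> borel_measurable (lebesgue_on {a..b})"
      by (rule continuous_imp_measurable_on_sets_lebesgue[OF cc]) auto
    show "bounded (c ` {a..b})" by (intro compact_imp_bounded compact_continuous_image cc) auto
  qed auto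
  then have "(\<lambda>x. 2 * (c x * wx x)) integrable_on {a..b}"
    unfolding absolutely_integrable_on_def by (intro integrable_on_mult_right) auto
  moreover have "(\<lambda>x. (c x)^2) integrable_on {a..b}"
    by (rule integrable_continuous_interval) (intro continuous_intros cc)
  ultimately have "(\<lambda>x. (wx x)^2 + 2 * (c x * wx x) + (c x)^2) integrable_on {a..b}"
    by (intro integrable_add wx_integrable(2)[OF assms])
  then show "(\<lambda>x. (strain x)^2) integrable_on {a..b}"
    by (rule integrable_eq) (auto simp: strain_eq power2_eq_square algebra_simps)
qed

lemma restricted_integrable:
  assumes "0 \<le> a" "b \<le> 1"
  shows "(\<lambda>x. if x \<in> \<Omega> then (w x)^2 else 0) integrable_on {a..b}"
    "(\<lambda>x. if x \<in> \<Omega> then (wx x)^2 else 0) integrable_on {a..b}"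
proof -
  have \<Omega>: "\<Omega> \<in> sets lebesgue" using \<Omega>_closed by simp
  have "continuous_on {a..b} w"
    using H1per_deriv_continuous_on[OF w_H1] by (rule continuous_on_subset) (use assms in auto)
  then have "continuous_on {a..b} (\<lambda>x. (w x)^2)" by (intro continuous_intros)
  then show "(\<lambda>x. if x \<in> \<Omega> then (w x)^2 else 0) integrable_on {a..b}"
    by (intro integrable_restrict_measurable absolutely_integrable_continuous_real \<Omega>)
  have "(\<lambda>x. (wx x)^2) absolutely_integrable_on {a..b}"
    by (rule nonnegative_absolutely_integrable_1[OF wx_integrable(2)[OF assms]]) auto
  then show "(\<lambda>x. if x \<in> \<Omega> then (wx x)^2 else 0) integrable_on {a..b}"
    by (rule integrable_restrict_measurable[OF _ \<Omega>])
qed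

text \<open>\<open>u \<ge> 0\<close> attains its minimum on \<open>\<Omega>\<close>, so its continuous derivative vanishes there; at the
  endpoints the one-sided signs at \<open>0\<close> and at \<open>1\<close> are combined by periodicity.\<close>

lemma ux_vanishes:
  assumes "z \<in> \<Omega>" "0 \<le> z" "z \<le> 1"
  shows "ux z = 0"
proof -
  have ux_cont: "continuous_on {0..1} ux" by (rule H1per_deriv_continuous_on[OF ux_H1])
  have right: "0 \<le> ux y" if "y \<in> \<Omega>" "0 \<le> y" "y < 1" for y
    using H1per_deriv_nonneg_at_zero[OF u_H1 ux_cont u_nonneg] that u_vanishes by blast
  have left: "ux y \<le> 0" if "y \<in> \<Omega>" "0 < y" "y \<le> 1" for y
    using H1per_deriv_nonpos_at_zero[OF u_H1 ux_cont u_nonneg] that u_vanishes by blast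
  have "ux 1 = ux 0" using H1per_derivD(1)[OF ux_H1, of 0] by simp
  moreover have "0 \<in> \<Omega> \<longleftrightarrow> 1 \<in> \<Omega>" using \<Omega>_periodic[of 0] by simp
  ultimately show ?thesis
    using right[of z] left[of z] right[of 0] left[of 1] assms by fastforce
qed

lemma ux_square_le:
  assumes "0 \<le> a" "a \<le> x" "x \<le> b" "b \<le> 1" "z \<in> \<Omega>" "a \<le> z" "z \<le> b"
  shows "(ux x)^2 \<le> (b - a) * integral {a..b} (\<lambda>x. (uxx x)^2)"
proof -
  define p q where "p = min x z" and "q = max x z"
  have pq: "a \<le> p" "p \<le> q" "q \<le> b" using assms by (auto simp: p_def q_def)
  have "(ux x)^2 = (ux q - ux p)^2"
    using ux_vanishes[of z] assms by (cases "x \<le> z") (auto simp: p_def q_def power2_commute)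
  also have "\<dots> = (integral {p..q} uxx)^2"
    using H1per_deriv_increment[OF ux_H1, of p q] pq assms by auto
  also have "\<dots> \<le> (q - p) * integral {p..q} (\<lambda>x. (uxx x)^2)"
    using uxx_integrable[of p q] pq assms by (intro square_integral_le) auto
  also have "\<dots> \<le> (b - a) * integral {a..b} (\<lambda>x. (uxx x)^2)"
    using uxx_integrable pq assms
    by (intro mult_mono integral_subset_le integral_nonneg) auto
  finally show ?thesis .
qed

lemma integral_ux_square_le:
  assumes "0 \<le> a" "a \<le> b" "b \<le> 1" "0 < integral {a..b} (indicat_real \<Omega>)"
  shows "integral {a..b} (\<lambda>x. (ux x)^2) \<le>
    ((b - a) - integral {a..b} (indicat_real \<Omega>)) * ((b - a) * integral {a..b} (\<lambda>x. (uxx x)^2))"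
proof -
  define C where "C = (b - a) * integral {a..b} (\<lambda>x. (uxx x)^2)"
  obtain z where z: "z \<in> \<Omega>" "a \<le> z" "z \<le> b"
  proof (rule ccontr)
    assume "\<not> thesis"
    then have "integral {a..b} (indicat_real \<Omega>) = integral {a..b} (\<lambda>x. 0::real)"
      using that by (intro integral_cong) (auto simp: indicator_def)
    then show False using assms by simp
  qed
  have "(ux x)^2 \<le> (1 - indicat_real \<Omega> x) * C" if "x \<in> {a..b}" for x
    using ux_vanishes ux_square_le[of a x b z] that assms z by (cases "x \<in> \<Omega>") (auto simp: C_def)
  then have "integral {a..b} (\<lambda>x. (ux x)^2) \<le> integral {a..b} (\<lambda>x. (1 - indicat_real \<Omega> x) * C)"
    using ux_integrable assms indicator_\<Omega>_integrable
    by (intro integral_le integrable_on_mult_left integrable_diff) auto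
  also have "\<dots> = ((b - a) - integral {a..b} (indicat_real \<Omega>)) * C"
  proof -
    have "integral {a..b} (\<lambda>x. 1 - indicat_real \<Omega> x) = (b - a) - integral {a..b} (indicat_real \<Omega>)"
      by (subst integral_diff) (use indicator_\<Omega>_integrable assms in auto)
    then show ?thesis by simp
  qed
  finally show ?thesis by (simp add: C_def)
qed

lemma integral_wx:
  assumes "0 \<le> x" "x \<le> y" "y \<le> 1"
  shows "integral {x..y} wx
    = integral {x..y} strain + \<eta> * (y - x) - integral {x..y} (\<lambda>t. (ux t)^2) / 2"
proof -
  have "((\<lambda>t. strain t + \<eta> - (ux t)^2 / 2) has_integral
    (integral {x..y} strain + \<eta> * (y - x) - integral {x..y} (\<lambda>t. (ux t)^2) / 2)) {x..y}"
    using has_integral_const_real[of \<eta> x y] assms strain_integrable(1) ux_integrable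
    by (intro has_integral_diff has_integral_add has_integral_divide integrable_integral)
       (auto simp: mult.commute)
  moreover have "(\<lambda>t. strain t + \<eta> - (ux t)^2 / 2) = wx" by (auto simp: strain_def)
  ultimately show ?thesis using integral_unique by metis
qed

lemma w_increment_ge:
  assumes "0 \<le> a" "a \<le> x" "x \<le> y" "y \<le> b" "b \<le> 1"
  shows "\<eta> * (y - x) -
     (integral {a..b} (\<lambda>x. (ux x)^2) / 2 + integral {a..b} (\<lambda>x. \<bar>strain x\<bar>)) \<le> w y - w x"
proof -
  have xy: "0 \<le> x" "y \<le> 1" using assms by auto
  have "integral {x..y} (\<lambda>t. - \<bar>strain t\<bar>) \<le> integral {x..y} strain"
    by (rule integral_le) (use strain_integrable[OF xy] in \<open>auto intro: integrable_neg\<close>)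
  moreover have "integral {x..y} (\<lambda>t. \<bar>strain t\<bar>) \<le> integral {a..b} (\<lambda>t. \<bar>strain t\<bar>)"
    by (rule integral_subset_le) (use strain_integrable xy assms in auto)
  moreover have "integral {x..y} (\<lambda>t. (ux t)^2) \<le> integral {a..b} (\<lambda>t. (ux t)^2)"
    by (rule integral_subset_le) (use ux_integrable xy assms in auto)
  moreover have "w y - w x = integral {x..y} wx"
    using H1per_deriv_increment[OF w_H1, of x y] assms by auto
  ultimately show ?thesis using integral_wx[of x y] assms by simp
qed

text \<open>In a cell where \<open>ux\<close> and the strain are small compared with \<open>\<eta> m\<close> (\<open>m\<close> the mass of \<open>\<Omega>\<close> in
  the cell), \<open>w\<close> grows with slope about \<open>\<eta>\<close>, so the points of \<open>\<Omega>\<close> where \<open>\<bar>w\<bar> < \<eta> m / 8\<close> lie in an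
  interval of length \<open>m / 2\<close>; on the remaining half of the mass \<open>w\<^sup>2 \<ge> (\<eta> m / 8)\<^sup>2\<close>.\<close>

lemma small_w_on_\<Omega>_in_short_interval:
  assumes "0 \<le> a" "a \<le> b" "b \<le> 1"
    and small: "integral {a..b} (\<lambda>x. (ux x)^2) / 2 + integral {a..b} (\<lambda>x. \<bar>strain x\<bar>)
          \<le> \<eta> * integral {a..b} (indicat_real \<Omega>) / 4"
  obtains p where "{x \<in> {a..b}. x \<in> \<Omega> \<and> \<bar>w x\<bar> < \<eta> * integral {a..b} (indicat_real \<Omega>) / 8}
    \<subseteq> {p..p + integral {a..b} (indicat_real \<Omega>) / 2}"
proof -
  define m where "m = integral {a..b} (indicat_real \<Omega>)"
  define S where "S = {x \<in> {a..b}. x \<in> \<Omega> \<and> \<bar>w x\<bar> < \<eta> * m / 8}"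
  have m0: "0 \<le> m / 2" using integral_indicator_\<Omega>_bounds(1) assms by (simp add: m_def)
  have spread: "y - x \<le> m / 2" if "x \<in> S" "y \<in> S" for x y
  proof (cases "x < y")
    case True
    then have "\<eta> * (y - x) - \<eta> * m / 4 \<le> w y - w x"
      using w_increment_ge[of a x y b] that assms small by (fastforce simp: S_def m_def)
    moreover have "w y - w x < \<eta> * m / 4" using that by (auto simp: S_def)
    ultimately have "\<eta> * (y - x) < \<eta> * (m / 2)" by simp
    then show ?thesis using \<eta>_pos by simp
  qed (use m0 in simp)
  have "bdd_below S" by (rule bdd_belowI[of _ a]) (auto simp: S_def)
  then obtain p where "S \<subseteq> {p..p + m / 2}"
    using subset_atLeastAtMost_if_spread_le[of S "m / 2"] m0 spread by blast
  then show ?thesis using that by (simp add: S_def m_def)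
qed

lemma cell_integral_w_square_ge:
  assumes "0 \<le> a" "a \<le> b" "b \<le> 1"
    and small: "integral {a..b} (\<lambda>x. (ux x)^2) / 2 + integral {a..b} (\<lambda>x. \<bar>strain x\<bar>)
          \<le> \<eta> * integral {a..b} (indicat_real \<Omega>) / 4"
  shows "\<eta>^2 * (integral {a..b} (indicat_real \<Omega>))^3 / 128
      \<le> integral {a..b} (\<lambda>x. if x \<in> \<Omega> then (w x)^2 else 0)"
proof -
  define m where "m = integral {a..b} (indicat_real \<Omega>)"
  define t where "t = \<eta> * m / 8"
  define D where "D = m / 2"
  have D0: "0 \<le> D" using integral_indicator_\<Omega>_bounds(1) assms by (simp add: m_def D_def)
  then have t0: "0 \<le> t" using \<eta>_pos by (simp add: t_def D_def)
  obtain p where p: "{x \<in> {a..b}. x \<in> \<Omega> \<and> \<bar>w x\<bar> < t} \<subseteq> {p..p + D}"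
    using small_w_on_\<Omega>_in_short_interval[OF assms] by (auto simp: t_def D_def m_def)
  have pointwise: "t^2 * (indicat_real \<Omega> x - indicat_real {p..p + D} x)
      \<le> (if x \<in> \<Omega> then (w x)^2 else 0)" if "x \<in> {a..b}" for x
  proof (cases "x \<in> \<Omega> \<and> x \<notin> {p..p + D}")
    case True
    then have "t \<le> \<bar>w x\<bar>" using p that by auto
    then have "t^2 \<le> (w x)^2" using t0 by (metis abs_of_nonneg power2_abs power_mono)
    then show ?thesis using True by simp
  qed (auto simp: indicator_def)
  have I_integrable: "indicat_real {p..p + D} integrable_on {a..b}"
    by (simp add: integrable_on_indicator lmeasurable_compact compact_Int)
  have "\<eta>^2 * m^3 / 128 = t^2 * (m - D)"
    by (simp add: t_def D_def power2_eq_square power3_eq_cube field_simps)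
  also have "\<dots> \<le> t^2 * (m - integral {a..b} (indicat_real {p..p + D}))"
    using integral_indicator_interval_le[OF D0, of a b p] by (intro mult_left_mono) auto
  also have "\<dots> = integral {a..b} (\<lambda>x. t^2 * (indicat_real \<Omega> x - indicat_real {p..p + D} x))"
    using I_integrable by (simp add: integral_diff[OF indicator_\<Omega>_integrable] m_def)
  also have "\<dots> \<le> integral {a..b} (\<lambda>x. if x \<in> \<Omega> then (w x)^2 else 0)"
    using restricted_integrable assms pointwise I_integrable
    by (intro integral_le integrable_on_mult_right integrable_diff indicator_\<Omega>_integrable) auto
  finally show ?thesis by (simp add: m_def)
qed

lemma integral_abs_strain_le:
  assumes "integral {0..1} (\<lambda>x. (strain x)^2) \<le> (\<eta> * \<theta> / 32)^2"
  shows "integral {0..1} (\<lambda>x. \<bar>strain x\<bar>) \<le> \<eta> * \<theta> / 32"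
proof (rule power2_le_imp_le)
  show "(integral {0..1} (\<lambda>x. \<bar>strain x\<bar>))^2 \<le> (\<eta> * \<theta> / 32)^2"
    using square_integral_le[of "\<lambda>x. \<bar>strain x\<bar>" 0 1] strain_integrable[of 0 1] assms by simp
qed (use \<eta>_pos \<theta>_pos in simp)

text \<open>The periodicity of \<open>w\<close> forces the mismatch strain \<open>\<eta>\<close> to be absorbed by the slope \<open>ux\<close>.\<close>

lemma integral_ux_square_ge:
  "2 * (\<eta> - integral {0..1} (\<lambda>x. \<bar>strain x\<bar>)) \<le> integral {0..1} (\<lambda>x. (ux x)^2)"
  using w_increment_ge[of 0 0 1 1] H1per_derivD(1)[OF w_H1, of 0] by simp

lemma bending_ge:
  assumes "integral {0..1} (\<lambda>x. (strain x)^2) \<le> (\<eta> * \<theta> / 32)^2"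
  shows "\<eta> \<le> (1 - \<theta>) * integral {0..1} (\<lambda>x. (uxx x)^2)"
proof -
  have "integral {0..1} (\<lambda>x. \<bar>strain x\<bar>) \<le> \<eta> / 32"
  proof -
    have "\<eta> * \<theta> \<le> \<eta>" using mult_left_mono[of \<theta> 1 \<eta>] \<eta>_pos \<theta>_less_1 by simp
    then show ?thesis using integral_abs_strain_le[OF assms] by simp
  qed
  then have "\<eta> \<le> integral {0..1} (\<lambda>x. (ux x)^2)" using integral_ux_square_ge \<eta>_pos by argo
  also have "\<dots> \<le> (1 - \<theta>) * integral {0..1} (\<lambda>x. (uxx x)^2)"
    using integral_ux_square_le[of 0 1] integral_indicator_\<Omega> \<theta>_pos by simp
  finally show ?thesis .
qed

text \<open>On \<open>\<Omega>\<close> the slope \<open>ux\<close> vanishes, so the strain there is \<open>wx - \<eta>\<close>.\<close>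

lemma integral_wx_square_on_\<Omega>_ge:
  "\<eta>^2 * \<theta> / 2 - integral {0..1} (\<lambda>x. (strain x)^2) \<le> integral (\<Omega> \<inter> {0..1}) (\<lambda>x. (wx x)^2)"
proof -
  have "(\<eta>^2 / 2) * indicat_real \<Omega> x - (strain x)^2 \<le> (if x \<in> \<Omega> then (wx x)^2 else 0)"
    if "x \<in> {0..1}" for x
  proof (cases "x \<in> \<Omega>")
    case True
    then have "strain x = wx x - \<eta>" using ux_vanishes that by (simp add: strain_def)
    moreover have "\<eta>^2 / 2 - (wx x - \<eta>)^2 \<le> (wx x)^2"
      using zero_le_power2[of "2 * wx x - \<eta>"] by (simp add: power2_eq_square algebra_simps)
    ultimately show ?thesis using True by simp
  qed simp
  then have "integral {0..1} (\<lambda>x. (\<eta>^2 / 2) * indicat_real \<Omega> x - (strain x)^2)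
      \<le> integral {0..1} (\<lambda>x. if x \<in> \<Omega> then (wx x)^2 else 0)"
    using strain_integrable(3)[of 0 1] restricted_integrable(2)[of 0 1]
    by (intro integral_le integrable_diff integrable_on_mult_right indicator_\<Omega>_integrable) auto
  moreover have "integral {0..1} (\<lambda>x. (\<eta>^2 / 2) * indicat_real \<Omega> x - (strain x)^2)
      = \<eta>^2 / 2 * \<theta> - integral {0..1} (\<lambda>x. (strain x)^2)"
  proof (rule integral_unique)
    show "((\<lambda>x. (\<eta>^2 / 2) * indicat_real \<Omega> x - (strain x)^2)
        has_integral (\<eta>^2 / 2 * \<theta> - integral {0..1} (\<lambda>x. (strain x)^2))) {0..1}"
      using integrable_integral[OF indicator_\<Omega>_integrable[of 0 1]] strain_integrable(3)[of 0 1]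
      unfolding integral_indicator_\<Omega>
      by (intro has_integral_diff has_integral_mult_right integrable_integral) auto
  qed
  ultimately show ?thesis by (simp add: integral_restrict_Int)
qed

lemma integral_w_square_on_\<Omega>_ge:
  assumes n: "0 < n" and strain: "integral {0..1} (\<lambda>x. \<bar>strain x\<bar>) \<le> \<eta> * \<theta> / 32"
    and B: "0 < integral {0..1} (\<lambda>x. (uxx x)^2)"
    and mesh: "(1 / real n)^2 \<le> \<eta> * \<theta> / (128 * integral {0..1} (\<lambda>x. (uxx x)^2) * (1 - \<theta>))"
  shows "\<eta>^2 * \<theta>^3 * (1 / real n)^2 / 4096 \<le> integral (\<Omega> \<inter> {0..1}) (\<lambda>x. (w x)^2)"
proof -
  define cell where "cell k = {real k / n..real (Suc k) / n}" for k
  have cell_bounds: "0 \<le> real k / n" "real k / n \<le> real (Suc k) / n"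
    "real (Suc k) / n - real k / n = 1 / n" for k
    by (auto simp: divide_right_mono diff_divide_distrib[symmetric])
  have cell_le_1: "real (Suc k) / n \<le> 1" if "k < n" for k
    using that n by (simp add: field_simps)
  have split: "integral {0..1} g = (\<Sum>k<n. integral (cell k) g)"
    if "g integrable_on {0..1}" for g :: "real \<Rightarrow> real"
    using integral_uniform_partition[OF that n] by (simp add: cell_def)
  interpret cells: cell_estimates n "1 / real n" \<theta> \<eta> "integral {0..1} (\<lambda>x. (uxx x)^2)"
    "\<lambda>k. integral (cell k) (indicat_real \<Omega>)" "\<lambda>k. integral (cell k) (\<lambda>x. (uxx x)^2)"
    "\<lambda>k. integral (cell k) (\<lambda>x. \<bar>strain x\<bar>)" "\<lambda>k. integral (cell k) (\<lambda>x. (ux x)^2)"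
    "\<lambda>k. integral (cell k) (\<lambda>x. if x \<in> \<Omega> then (w x)^2 else 0)"
  proof unfold_locales
    fix k assume k: "k < n"
    note bounds = cell_bounds[of k] cell_le_1[OF k]
    show "0 \<le> integral (cell k) (indicat_real \<Omega>) \<and> integral (cell k) (indicat_real \<Omega>) \<le> 1 / real n"
      using integral_indicator_\<Omega>_bounds[OF bounds(2)] bounds(3) by (simp add: cell_def)
    show "0 \<le> integral (cell k) (\<lambda>x. (uxx x)^2)" "0 \<le> integral (cell k) (\<lambda>x. \<bar>strain x\<bar>)"
      "0 \<le> integral (cell k) (\<lambda>x. if x \<in> \<Omega> then (w x)^2 else 0)"
      using bounds uxx_integrable(2) strain_integrable(2) restricted_integrable(1)
      by (auto simp: cell_def intro!: integral_nonneg)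
    show "0 < integral (cell k) (indicat_real \<Omega>) \<Longrightarrow> integral (cell k) (\<lambda>x. (ux x)^2)
        \<le> (1 / real n - integral (cell k) (indicat_real \<Omega>)) * (1 / real n * integral (cell k) (\<lambda>x. (uxx x)^2))"
      using integral_ux_square_le[OF bounds(1,2,4)] bounds(3) by (simp add: cell_def)
    show "integral (cell k) (\<lambda>x. (ux x)^2) / 2 + integral (cell k) (\<lambda>x. \<bar>strain x\<bar>)
        \<le> \<eta> * integral (cell k) (indicat_real \<Omega>) / 4 \<Longrightarrow>
      \<eta>^2 * (integral (cell k) (indicat_real \<Omega>))^3 / 128
        \<le> integral (cell k) (\<lambda>x. if x \<in> \<Omega> then (w x)^2 else 0)"
      using cell_integral_w_square_ge[OF bounds(1,2,4)] by (simp add: cell_def)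
  next
    show "(\<Sum>k<n. integral (cell k) (indicat_real \<Omega>)) = \<theta>"
      using split[OF indicator_\<Omega>_integrable] integral_indicator_\<Omega> by simp
    show "(\<Sum>k<n. integral (cell k) (\<lambda>x. (uxx x)^2)) = integral {0..1} (\<lambda>x. (uxx x)^2)"
      using split[OF uxx_integrable(2)] by simp
    show "(\<Sum>k<n. integral (cell k) (\<lambda>x. \<bar>strain x\<bar>)) \<le> \<eta> * \<theta> / 32"
      using split[OF strain_integrable(2)] strain by simp
  qed (use n B mesh \<theta>_pos \<theta>_less_1 \<eta>_pos in auto)
  have "\<eta>^2 * \<theta>^3 * (1 / real n)^2 / 4096
      \<le> (\<Sum>k<n. integral (cell k) (\<lambda>x. if x \<in> \<Omega> then (w x)^2 else 0))"
    by (rule cells.sum_W_ge)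
  also have "\<dots> = integral (\<Omega> \<inter> {0..1}) (\<lambda>x. (w x)^2)"
    using split[OF restricted_integrable(1)] by (simp add: integral_restrict_Int)
  finally show ?thesis .
qed


lemma substrate_product_ge:
  assumes membrane: "integral {0..1} (\<lambda>x. (strain x)^2) \<le> (\<eta> * \<theta> / 32)^2"
    and n: "0 < n" and B: "0 < integral {0..1} (\<lambda>x. (uxx x)^2)"
    and mesh: "(1 / real n)^2 \<le> \<eta> * \<theta> / (128 * integral {0..1} (\<lambda>x. (uxx x)^2) * (1 - \<theta>))"
  shows "\<eta>^2 * \<theta>^2 * (1 / real n) / 128
    \<le> sqrt (integral (\<Omega> \<inter> {0..1}) (\<lambda>x. (wx x)^2)) * sqrt (integral (\<Omega> \<inter> {0..1}) (\<lambda>x. (w x)^2))"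
proof -
  have "\<theta>^2 \<le> \<theta> * 256"
    using mult_left_mono[of \<theta> 256 \<theta>] \<theta>_pos \<theta>_less_1 by (simp add: power2_eq_square)
  then have "\<eta>^2 * \<theta>^2 \<le> \<eta>^2 * (\<theta> * 256)" by (rule mult_left_mono) simp
  then have "(\<eta> * \<theta> / 32)^2 \<le> \<eta>^2 * \<theta> / 4" by (simp add: power_mult_distrib power_divide)
  then have wx: "\<eta>^2 * \<theta> / 4 \<le> integral (\<Omega> \<inter> {0..1}) (\<lambda>x. (wx x)^2)"
    using integral_wx_square_on_\<Omega>_ge membrane by simp
  have w: "\<eta>^2 * \<theta>^3 * (1 / real n)^2 / 4096 \<le> integral (\<Omega> \<inter> {0..1}) (\<lambda>x. (w x)^2)"
    using integral_w_square_on_\<Omega>_ge[OF n integral_abs_strain_le[OF membrane] B mesh] .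
  have "(\<eta>^2 * \<theta>^2 * (1 / real n) / 128)^2 = (\<eta>^2 * \<theta> / 4) * (\<eta>^2 * \<theta>^3 * (1 / real n)^2 / 4096)"
    by (simp add: power2_eq_square power3_eq_cube field_simps)
  also have "\<dots> \<le> integral (\<Omega> \<inter> {0..1}) (\<lambda>x. (wx x)^2) * integral (\<Omega> \<inter> {0..1}) (\<lambda>x. (w x)^2)"
  proof (rule mult_mono[OF wx w])
    have "0 \<le> \<eta>^2 * \<theta> / 4" using \<theta>_pos by simp
    then show "0 \<le> integral (\<Omega> \<inter> {0..1}) (\<lambda>x. (wx x)^2)" using wx by linarith
  qed (use \<theta>_pos in simp)
  finally have "sqrt ((\<eta>^2 * \<theta>^2 * (1 / real n) / 128)^2)
      \<le> sqrt (integral (\<Omega> \<inter> {0..1}) (\<lambda>x. (wx x)^2) * integral (\<Omega> \<inter> {0..1}) (\<lambda>x. (w x)^2))"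
    by (rule real_sqrt_le_mono)
  then show ?thesis by (simp add: real_sqrt_mult)
qed

lemma bending_substrate_energy_ge:
  assumes membrane: "integral {0..1} (\<lambda>x. (strain x)^2) \<le> (\<eta> * \<theta> / 32)^2"
    and h: "0 < h" and \<alpha>s: "0 < \<alpha>s"
  shows "\<alpha>s powr (2/3) * \<eta> powr (5/3) * \<theta> powr (5/3) / (1 - \<theta>) powr (1/3) * h / 256
    \<le> h^3 * integral {0..1} (\<lambda>x. (uxx x)^2) + \<alpha>s *
      (sqrt (integral (\<Omega> \<inter> {0..1}) (\<lambda>x. (wx x)^2)) * sqrt (integral (\<Omega> \<inter> {0..1}) (\<lambda>x. (w x)^2)))"
    (is "_ \<le> h^3 * ?B + \<alpha>s * ?substrate")
proof -
  have bending: "\<eta> \<le> (1 - \<theta>) * ?B" using bending_ge[OF membrane] .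
  then have B: "0 < ?B" using \<eta>_pos \<theta>_less_1 by (smt (verit) mult_nonneg_nonpos)
  define R where "R = 128 * ?B * (1 - \<theta>) / (\<eta> * \<theta>)"
  have "\<eta> * \<theta> \<le> \<eta>" using mult_left_mono[of \<theta> 1 \<eta>] \<eta>_pos \<theta>_less_1 by simp
  moreover have "(1 - \<theta>) * ?B \<le> 128 * (?B * (1 - \<theta>))" using B \<theta>_less_1 by simp
  ultimately have "\<eta> * \<theta> \<le> 128 * (?B * (1 - \<theta>))" using bending by linarith
  then have "1 \<le> R" using \<eta>_pos \<theta>_pos by (simp add: R_def field_simps)
  then obtain n where n: "0 < n" "1 / (4 * R) \<le> (1 / real n)^2" "(1 / real n)^2 \<le> 1 / R"
    by (rule exists_mesh)
  have substrate: "\<eta>^2 * \<theta>^2 * (1 / real n) / 128 \<le> ?substrate"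
    by (rule substrate_product_ge[OF membrane n(1) B]) (use n(3) in \<open>simp add: R_def\<close>)
  then have "\<alpha>s * (\<eta>^2 * \<theta>^2 * (1 / real n) / 128) \<le> \<alpha>s * ?substrate"
    using \<alpha>s by (intro mult_left_mono) auto
  moreover have "0 \<le> h^3 * ?B" using h B by simp
  moreover have "\<alpha>s * \<eta>^2 * \<theta>^2 * (1 / real n) / 128 = \<alpha>s * (\<eta>^2 * \<theta>^2 * (1 / real n) / 128)"
    by simp
  ultimately have "\<alpha>s * \<eta>^2 * \<theta>^2 * (1 / real n) / 128 \<le> h^3 * ?B + \<alpha>s * ?substrate"
    by linarith
  moreover have "h^3 * ?B \<le> h^3 * ?B + \<alpha>s * ?substrate"
  proof -
    have "0 \<le> \<eta>^2 * \<theta>^2 * (1 / real n) / 128" by simp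
    then have "0 \<le> ?substrate" using substrate by linarith
    then show ?thesis using \<alpha>s by simp
  qed
  moreover have "\<eta> * \<theta> / (512 * ?B * (1 - \<theta>)) \<le> (1 / real n)^2"
    using n(2) by (simp add: R_def)
  ultimately show ?thesis
    using substrate_bending_balance[of \<alpha>s \<eta> \<theta> h ?B "1 / real n"] \<alpha>s \<eta>_pos \<theta>_pos \<theta>_less_1 h B n(1)
    by simp
qed

lemma energy1D_ge:
  assumes \<alpha>m: "0 < \<alpha>m" and h: "0 < h" and \<alpha>s: "0 < \<alpha>s"
  shows "1/1024 * min (\<alpha>m * \<eta>^2 * \<theta>^2)
      (\<alpha>s powr (2/3) * \<eta> powr (5/3) * \<theta> powr (5/3) / (1 - \<theta>) powr (1/3)) * h
    \<le> energy1D \<alpha>m h \<alpha>s \<eta> w wx ux uxx \<Omega>"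
proof -
  define M where "M = integral {0..1} (\<lambda>x. (strain x)^2)"
  define E where "E = energy1D \<alpha>m h \<alpha>s \<eta> w wx ux uxx \<Omega>"
  define S where "S = \<alpha>s powr (2/3) * \<eta> powr (5/3) * \<theta> powr (5/3) / (1 - \<theta>) powr (1/3)"
  have nonneg: "0 \<le> M" "0 \<le> integral {0..1} (\<lambda>x. (uxx x)^2)"
    "0 \<le> integral (\<Omega> \<inter> {0..1}) (\<lambda>x. (wx x)^2)" "0 \<le> integral (\<Omega> \<inter> {0..1}) (\<lambda>x. (w x)^2)"
    using strain_integrable(3)[of 0 1] uxx_integrable(2)[of 0 1] restricted_integrable[of 0 1]
    by (auto simp: M_def integral_restrict_Int[symmetric] intro!: integral_nonneg)
  have E: "E = \<alpha>m * h * M + (h^3 * integral {0..1} (\<lambda>x. (uxx x)^2) + \<alpha>s *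
      (sqrt (integral (\<Omega> \<inter> {0..1}) (\<lambda>x. (wx x)^2)) * sqrt (integral (\<Omega> \<inter> {0..1}) (\<lambda>x. (w x)^2))))"
    by (simp add: E_def energy1D_def M_def strain_def)
  consider (membrane) "(\<eta> * \<theta> / 32)^2 < M" | (bending) "M \<le> (\<eta> * \<theta> / 32)^2" by linarith
  then show ?thesis
  proof cases
    case membrane
    have "1/1024 * min (\<alpha>m * \<eta>^2 * \<theta>^2) S * h \<le> 1/1024 * (\<alpha>m * \<eta>^2 * \<theta>^2) * h"
      using h by (intro mult_right_mono mult_left_mono) auto
    also have "\<dots> = \<alpha>m * h * (\<eta> * \<theta> / 32)^2" by (simp add: power_mult_distrib power_divide)
    also have "\<dots> \<le> \<alpha>m * h * M" using membrane \<alpha>m h by (intro mult_left_mono) auto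
    also have "\<dots> \<le> E" unfolding E using nonneg \<alpha>s h by simp
    finally show ?thesis by (simp add: E_def S_def)
  next
    case bending
    have "0 < S" using \<alpha>s \<eta>_pos \<theta>_pos \<theta>_less_1 by (simp add: S_def)
    have "1/1024 * min (\<alpha>m * \<eta>^2 * \<theta>^2) S * h \<le> 1/1024 * S * h"
      using h by (intro mult_right_mono mult_left_mono) auto
    also have "\<dots> \<le> S * h / 256" using \<open>0 < S\<close> h by simp
    also have "\<dots> \<le> E" unfolding E
      using bending_substrate_energy_ge[OF bending[unfolded M_def] h \<alpha>s] nonneg \<alpha>m h
      by (simp add: S_def add_increasing)
    finally show ?thesis by (simp add: E_def S_def)
  qed
qed

end

lemma admissible1D_nonempty:
  fixes \<theta> :: real
  assumes "0 < \<theta>" "\<theta> < 1"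
  shows "\<exists>w wx u ux uxx \<Omega>. admissible1D \<theta> w wx u ux uxx \<Omega>"
proof -
  define \<Omega> where "\<Omega> = {x::real. cos (pi * \<theta>) \<le> cos (2 * pi * x)}"
  have H0: "H1per_deriv (\<lambda>x. 0) (\<lambda>x. 0)"
    by (simp add: H1per_deriv_def L2per_def periodic1_def integrable_0)
  have closed: "closed \<Omega>" unfolding \<Omega>_def by (intro closed_Collect_le continuous_intros)
  have periodic: "x \<in> \<Omega> \<longleftrightarrow> x + 1 \<in> \<Omega>" for x
    using cos_periodic[of "2 * pi * x"] by (simp add: \<Omega>_def distrib_left)
  have "x \<in> \<Omega> \<longleftrightarrow> x \<le> \<theta> / 2 \<or> 1 - \<theta> / 2 \<le> x" if "0 \<le> x" "x \<le> 1" for x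
  proof (cases "x \<le> 1/2")
    case True
    have "cos (pi * \<theta>) \<le> cos (2 * pi * x) \<longleftrightarrow> 2 * pi * x \<le> pi * \<theta>"
      by (rule cos_mono_le_eq) (use assms that True in \<open>auto simp: mult_le_cancel_left1\<close>)
    then show ?thesis using True assms by (auto simp: \<Omega>_def)
  next
    case False
    have "cos (2 * pi * x) = cos (2 * pi * (1 - x))"
      using cos_2pi_minus[of "2 * pi * x"] by (simp add: algebra_simps)
    moreover have "cos (pi * \<theta>) \<le> cos (2 * pi * (1 - x)) \<longleftrightarrow> 2 * pi * (1 - x) \<le> pi * \<theta>"
      by (rule cos_mono_le_eq) (use assms that False in \<open>auto simp: mult_le_cancel_left1\<close>)
    ultimately show ?thesis using False assms by (auto simp: \<Omega>_def)
  qed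
  then have "\<Omega> \<inter> {0..1} = {0..\<theta>/2} \<union> {1 - \<theta>/2..1}"
    using assms by auto
  moreover have "measure lebesgue ({0..\<theta>/2} \<union> {1 - \<theta>/2..1}) = \<theta>"
    using assms by (subst measure_Union) auto
  ultimately have "measure lebesgue (\<Omega> \<inter> {0..1}) = \<theta>" by simp
  then have "admissible1D \<theta> (\<lambda>x. 0) (\<lambda>x. 0) (\<lambda>x. 0) (\<lambda>x. 0) (\<lambda>x. 0) \<Omega>"
    unfolding admissible1D_def torus_closed_def using H0 closed periodic by auto
  then show ?thesis by blast
qed

theorem theorem1:
  shows "\<exists>K1>0. \<forall>\<alpha>m \<theta> h \<alpha>s \<eta> :: real.
     \<alpha>m > 0 \<longrightarrow> 0 < \<theta> \<longrightarrow> \<theta> < 1 \<longrightarrow> h > 0 \<longrightarrow> \<alpha>s > 0 \<longrightarrow> \<eta> > 0 \<longrightarrow>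
     minE1D \<alpha>m h \<alpha>s \<eta> \<theta> \<ge>
       K1 * min (\<alpha>m * \<eta>^2 * \<theta>^2)
                (\<alpha>s powr (2/3) * \<eta> powr (5/3) * \<theta> powr (5/3) / (1 - \<theta>) powr (1/3)) * h"
proof (intro exI[of _ "1/1024"] conjI allI impI)
  fix \<alpha>m \<theta> h \<alpha>s \<eta> :: real
  assume pos: "\<alpha>m > 0" "0 < \<theta>" "\<theta> < 1" "h > 0" "\<alpha>s > 0" "\<eta> > 0"
  let ?energies = "{energy1D \<alpha>m h \<alpha>s \<eta> w wx ux uxx \<Omega> | w wx u ux uxx \<Omega>.
    admissible1D \<theta> w wx u ux uxx \<Omega>}"
  show "1/1024 * min (\<alpha>m * \<eta>^2 * \<theta>^2)
      (\<alpha>s powr (2/3) * \<eta> powr (5/3) * \<theta> powr (5/3) / (1 - \<theta>) powr (1/3)) * h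
    \<le> minE1D \<alpha>m h \<alpha>s \<eta> \<theta>"
    unfolding minE1D_def
  proof (rule cInf_greatest)
    show "?energies \<noteq> {}" using admissible1D_nonempty[OF pos(2,3)] by blast
  next
    fix E assume "E \<in> ?energies"
    then obtain w wx u ux uxx \<Omega> where "E = energy1D \<alpha>m h \<alpha>s \<eta> w wx ux uxx \<Omega>"
      and "admissible1D \<theta> w wx u ux uxx \<Omega>" by blast
    then show "1/1024 * min (\<alpha>m * \<eta>^2 * \<theta>^2)
        (\<alpha>s powr (2/3) * \<eta> powr (5/3) * \<theta> powr (5/3) / (1 - \<theta>) powr (1/3)) * h \<le> E"
      using admissible_config.energy1D_ge[OF admissible_config.intro] pos by simp
  qed
qed simp

end
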